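(* Let $m\ge1$ and $n\in\mathbb{R}$. Suppose the boxes $b_0,\ldots,b_{m-1}$ are independent variables where each $b_i$ ranges over the whole real interval $[u_i,v_i]$, and $\sum_{i=0}^{m-1}u_i\le n\le\sum_{i=0}^{m-1}v_i$. Then there is no sequence $T=(t_0,\ldots,t_{m-1})$ of reals such that both (1) $\sum_{i}t_i<n$, and (2) for every choice of $B=(b_0,\ldots,b_{m-1})$ in the allowed ranges with $\sum_i b_i\le n$ and every $l\in\{1,\ldots,m\}$, there exists $i$ such that $\sum_{j=i}^{i+l'-1}b_j\le\sum_{j=i}^{i+l'-1}t_j$ for all $l'\in\{1,\ldots,l\}$.
   Context: Indices are taken modulo $m$. The chain $c_i^{l}$ is $(b_i,\ldots,b_{i+l-1})$ with sum $\|c_i^{l}\|=\sum_{j=i}^{i+l-1}b_j$. *)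

theory Defs
  imports Complex_Main
begin

definition chain_sum :: "nat \<Rightarrow> (nat \<Rightarrow> real) \<Rightarrow> nat \<Rightarrow> nat \<Rightarrow> real" where
  "chain_sum m b i l = (\<Sum>j = i..<i + l. b (j mod m))"

end

theory Submission
  imports Defs
begin

text \<open>Since some allotment of the boxes sums to exactly n, the case l = l' = m of condition (2)
  yields a chain that runs once around the whole cycle; its sum is the total of the boxes,
  so n \<le> \<Sum> t, contradicting (1).\<close>

lemma sum_mod_full_period:
  fixes f :: "nat \<Rightarrow> 'a::cancel_comm_monoid_add"
  assumes "m \<ge> 1"
  shows "(\<Sum>j = i..<i + m. f (j mod m)) = (\<Sum>j<m. f j)"
proof (induction i)
  case 0
  then show ?case by (simp add: atLeast0LessThan)
next
  case (Suc i)
  have "(\<Sum>j = i..<i + m. f (j mod m)) + f ((i + m) mod m) = (\<Sum>j = i..<Suc (i + m). f (j mod m))"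
    by (simp add: sum.atLeastLessThan_Suc)
  also have "\<dots> = f (i mod m) + (\<Sum>j = Suc i..<Suc i + m. f (j mod m))"
    using assms by (subst sum.atLeast_Suc_lessThan) auto
  finally show ?case
    using Suc by (metis add.commute add_left_cancel mod_add_self2)
qed

lemma chain_sum_full_period:
  assumes "m \<ge> 1"
  shows "chain_sum m b i m = (\<Sum>j<m. b j)"
  unfolding chain_sum_def using sum_mod_full_period[OF assms] .

lemma box_point_with_sum:
  fixes u v :: "'i \<Rightarrow> real"
  assumes "\<forall>i\<in>A. u i \<le> v i" and "sum u A \<le> n" and "n \<le> sum v A"
  obtains b where "\<forall>i\<in>A. u i \<le> b i \<and> b i \<le> v i" and "sum b A = n"
proof
  define U V where "U = sum u A" and "V = sum v A"
  define c where "c = (if V = U then 0 else (n - U) / (V - U))"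
  have "0 \<le> c \<and> c \<le> 1"
  proof (cases "V = U")
    case False
    with assms(2,3) have "U < V" unfolding U_def V_def by linarith
    then show ?thesis
      using assms(2,3) unfolding c_def U_def V_def by (simp add: False divide_le_eq_1)
  qed (simp add: c_def)
  then show "\<forall>i\<in>A. u i \<le> u i + c * (v i - u i) \<and> u i + c * (v i - u i) \<le> v i"
  proof (intro ballI conjI)
    fix i assume "i \<in> A" and "0 \<le> c \<and> c \<le> 1"
    moreover from \<open>i \<in> A\<close> have "0 \<le> v i - u i" using assms(1) by simp
    ultimately show "u i \<le> u i + c * (v i - u i)" and "u i + c * (v i - u i) \<le> v i"
      using mult_left_le_one_le[of "v i - u i" c] by simp_all
  qed
  have "(\<Sum>i\<in>A. u i + c * (v i - u i)) = U + c * (V - U)"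
    unfolding U_def V_def by (simp add: sum.distrib sum_distrib_left flip: sum_subtractf)
  also have "\<dots> = n"
    using assms(2,3) unfolding c_def U_def V_def by auto
  finally show "(\<Sum>i\<in>A. u i + c * (v i - u i)) = n" .
qed

theorem mainTheorem5:
  fixes m :: nat and n :: real and u v :: "nat \<Rightarrow> real"
  assumes "m \<ge> 1"
    and "\<forall>i<m. u i \<le> v i"
    and "(\<Sum>i<m. u i) \<le> n" and "n \<le> (\<Sum>i<m. v i)"
  shows "\<not> (\<exists>t :: nat \<Rightarrow> real.
            (\<Sum>i<m. t i) < n \<and>
            (\<forall>b :: nat \<Rightarrow> real.
               (\<forall>i<m. u i \<le> b i \<and> b i \<le> v i) \<and> (\<Sum>i<m. b i) \<le> n \<longrightarrow>
               (\<forall>l\<in>{1..m}. \<exists>i<m. \<forall>l'\<in>{1..l}.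
                  chain_sum m b i l' \<le> chain_sum m t i l')))"
proof (rule notI, elim exE conjE)
  fix t
  assume t_sum: "(\<Sum>i<m. t i) < n"
    and t_dominates: "\<forall>b. (\<forall>i<m. u i \<le> b i \<and> b i \<le> v i) \<and> (\<Sum>i<m. b i) \<le> n \<longrightarrow>
      (\<forall>l\<in>{1..m}. \<exists>i<m. \<forall>l'\<in>{1..l}. chain_sum m b i l' \<le> chain_sum m t i l')"
  obtain b where b_box: "\<forall>i\<in>{..<m}. u i \<le> b i \<and> b i \<le> v i" and b_sum: "(\<Sum>i<m. b i) = n"
    using box_point_with_sum[of "{..<m}" u v n] assms(2-4) by blast
  have "\<forall>l\<in>{1..m}. \<exists>i<m. \<forall>l'\<in>{1..l}. chain_sum m b i l' \<le> chain_sum m t i l'"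
    using t_dominates b_box b_sum by simp
  then obtain i where "chain_sum m b i m \<le> chain_sum m t i m"
    using assms(1) by (meson atLeastAtMost_iff order_refl)
  then have "n \<le> (\<Sum>j<m. t j)"
    using b_sum by (simp add: chain_sum_full_period[OF assms(1)])
  with t_sum show False by simp
qed

end
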